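(* For all $\boldsymbol\mu,\boldsymbol\mu'\in\mathcal P(\mathcal X\times[K])$ and every collection $\boldsymbol\pi=(\pi_k)_{k\in[K]}$ of decision rules $\pi_k:\mathcal X\times\mathcal P(\mathcal X)\to\mathcal P(\mathcal U)$ with $|\pi_k(x,\mu_1)-\pi_k(x,\mu_2)|_1\le L_Q|\mu_1-\mu_2|_1$ for all $x,k,\mu_1,\mu_2$: (a) $|\nu^{\mathrm{MF}}(\boldsymbol\mu,\boldsymbol\pi)[\mathcal U]-\nu^{\mathrm{MF}}(\boldsymbol\mu',\boldsymbol\pi)[\mathcal U]|_1\le|\nu^{\mathrm{MF}}(\boldsymbol\mu,\boldsymbol\pi)-\nu^{\mathrm{MF}}(\boldsymbol\mu',\boldsymbol\pi)|_1\le|\boldsymbol\mu-\boldsymbol\mu'|_1+L_Q|\boldsymbol\mu[\mathcal X]-\boldsymbol\mu'[\mathcal X]|_1$; (b) $\sum_{k\in[K]}|r_k^{\mathrm{MF}}(\boldsymbol\mu,\boldsymbol\pi)-r_k^{\mathrm{MF}}(\boldsymbol\mu',\boldsymbol\pi)|\le S_R'|\boldsymbol\mu-\boldsymbol\mu'|_1+S_R''|\boldsymbol\mu[\mathcal X]-\boldsymbol\mu'[\mathcal X]|_1$; (c) $|P^{\mathrm{MF}}(\boldsymbol\mu,\boldsymbol\pi)[\mathcal X]-P^{\mathrm{MF}}(\boldsymbol\mu',\boldsymbol\pi)[\mathcal X]|_1\le|P^{\mathrm{MF}}(\boldsymbol\mu,\boldsymbol\pi)-P^{\mathrm{MF}}(\boldsymbol\mu',\boldsymbol\pi)|_1\le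 S_P'|\boldsymbol\mu-\boldsymbol\mu'|_1+S_P''|\boldsymbol\mu[\mathcal X]-\boldsymbol\mu'[\mathcal X]|_1$, where $S_R'=M_R+L_R$, $S_R''=M_RL_Q+L_R(1+L_Q)$, $S_P'=1+L_P$, $S_P''=L_Q+L_P(1+L_Q)$.
   Context: $K\ge1$, $[K]=\{1,\dots,K\}$, $\mathcal X,\mathcal U$ finite, $\mathcal P(A)$ the probability distributions on $A$, $|\cdot|_1$ the $L_1$ norm, constants $M_R,L_R,L_P,L_Q>0$. Marginals: for $\boldsymbol\mu$ on $\mathcal X\times[K]$, $\boldsymbol\mu[\mathcal X](x)=\sum_k\boldsymbol\mu(x,k)$; for $\boldsymbol\nu$ on $\mathcal U\times[K]$, $\boldsymbol\nu[\mathcal U](u)=\sum_k\boldsymbol\nu(u,k)$. For each $k$: $r_k:\mathcal X\times\mathcal U\times\mathcal P(\mathcal X)\times\mathcal P(\mathcal U)\to\mathbb R$ and $P_k:\mathcal X\times\mathcal U\times\mathcal P(\mathcal X)\times\mathcal P(\mathcal U)\to\mathcal P(\mathcal X)$ with $|r_k|\le M_R$, $|r_k(x,u,\mu_1,\nu_1)-r_k(x,u,\mu_2,\nu_2)|\le L_R(|\mu_1-\mu_2|_1+|\nu_1-\nu_2|_1)$, $|P_k(x,u,\mu_1,\nu_1)-P_k(x,u,\mu_2,\nu_2)|_1\le L_P(|\mu_1-\mu_2|_1+|\nu_1-\nu_2|_1)$. Mean-field operators: $\nu^{\mathrm{MF}}(\boldsymbol\mu,\boldsymbol\pi)(u,k)=\sum_x\pi_k(x,\boldsymbol\mu[\mathcal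 X])(u)\boldsymbol\mu(x,k)$; $P^{\mathrm{MF}}(\boldsymbol\mu,\boldsymbol\pi)(x',k)=\sum_{x,u}\boldsymbol\mu(x,k)\pi_k(x,\boldsymbol\mu[\mathcal X])(u)P_k(x,u,\boldsymbol\mu[\mathcal X],\nu^{\mathrm{MF}}(\boldsymbol\mu,\boldsymbol\pi)[\mathcal U])(x')$; $r_k^{\mathrm{MF}}(\boldsymbol\mu,\boldsymbol\pi)=\sum_{x,u}\boldsymbol\mu(x,k)\pi_k(x,\boldsymbol\mu[\mathcal X])(u)r_k(x,u,\boldsymbol\mu[\mathcal X],\nu^{\mathrm{MF}}(\boldsymbol\mu,\boldsymbol\pi)[\mathcal U])$. *)

theory Defs
  imports Main "HOL-Analysis.Analysis"
begin

text \<open>A distribution on a finite type is a nonnegative function summing to 1.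
  A distribution on X x [K] is a curried function mu :: 'x => nat => real whose
  relevant values are those with k in {1..K}.\<close>

definition is_dist :: "('a::finite \<Rightarrow> real) \<Rightarrow> bool" where
  "is_dist f \<longleftrightarrow> (\<forall>a. 0 \<le> f a) \<and> (\<Sum>a\<in>UNIV. f a) = 1"

definition is_distK :: "nat \<Rightarrow> ('a::finite \<Rightarrow> nat \<Rightarrow> real) \<Rightarrow> bool" where
  "is_distK K f \<longleftrightarrow> (\<forall>a. \<forall>k\<in>{1..K}. 0 \<le> f a k) \<and> (\<Sum>a\<in>UNIV. \<Sum>k\<in>{1..K}. f a k) = 1"

definition l1 :: "('a::finite \<Rightarrow> real) \<Rightarrow> ('a \<Rightarrow> real) \<Rightarrow> real" where
  "l1 f g = (\<Sum>a\<in>UNIV. \<bar>f a - g a\<bar>)"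

definition l1K :: "nat \<Rightarrow> ('a::finite \<Rightarrow> nat \<Rightarrow> real) \<Rightarrow> ('a \<Rightarrow> nat \<Rightarrow> real) \<Rightarrow> real" where
  "l1K K f g = (\<Sum>a\<in>UNIV. \<Sum>k\<in>{1..K}. \<bar>f a k - g a k\<bar>)"

definition marg :: "nat \<Rightarrow> ('a \<Rightarrow> nat \<Rightarrow> real) \<Rightarrow> 'a \<Rightarrow> real" where
  "marg K f a = (\<Sum>k\<in>{1..K}. f a k)"

text \<open>Mean-field operators. pol k x m u = pi_k(x, m)(u);
  r k x u m n = r_k(x,u,m,n); P k x u m n x' = P_k(x,u,m,n)(x').\<close>
definition nuMF :: "nat \<Rightarrow> ('x::finite \<Rightarrow> nat \<Rightarrow> real)
    \<Rightarrow> (nat \<Rightarrow> 'x \<Rightarrow> ('x \<Rightarrow> real) \<Rightarrow> 'u \<Rightarrow> real) \<Rightarrow> 'u \<Rightarrow> nat \<Rightarrow> real" where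
  "nuMF K mu pol u k = (\<Sum>x\<in>UNIV. pol k x (marg K mu) u * mu x k)"

definition PMF :: "nat \<Rightarrow> (nat \<Rightarrow> 'x \<Rightarrow> 'u \<Rightarrow> ('x \<Rightarrow> real) \<Rightarrow> ('u \<Rightarrow> real) \<Rightarrow> 'x \<Rightarrow> real)
    \<Rightarrow> ('x::finite \<Rightarrow> nat \<Rightarrow> real)
    \<Rightarrow> (nat \<Rightarrow> 'x \<Rightarrow> ('x \<Rightarrow> real) \<Rightarrow> 'u::finite \<Rightarrow> real) \<Rightarrow> 'x \<Rightarrow> nat \<Rightarrow> real" where
  "PMF K P mu pol x' k = (\<Sum>x\<in>UNIV. \<Sum>u\<in>UNIV. mu x k * pol k x (marg K mu) u *
       P k x u (marg K mu) (marg K (nuMF K mu pol)) x')"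

definition rMF :: "nat \<Rightarrow> (nat \<Rightarrow> 'x \<Rightarrow> 'u \<Rightarrow> ('x \<Rightarrow> real) \<Rightarrow> ('u \<Rightarrow> real) \<Rightarrow> real)
    \<Rightarrow> ('x::finite \<Rightarrow> nat \<Rightarrow> real)
    \<Rightarrow> (nat \<Rightarrow> 'x \<Rightarrow> ('x \<Rightarrow> real) \<Rightarrow> 'u::finite \<Rightarrow> real) \<Rightarrow> nat \<Rightarrow> real" where
  "rMF K r mu pol k = (\<Sum>x\<in>UNIV. \<Sum>u\<in>UNIV. mu x k * pol k x (marg K mu) u *
       r k x u (marg K mu) (marg K (nuMF K mu pol)))"

end

theory Submission
  imports Defs
begin

text \<open>Both mean-field maps integrate a kernel against the joint state-action distribution
  w(x,u,k) = mu(x,k) pi_k(x, mu[X])(u), and nu^MF is the marginal of w on U x [K].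
  Moving mu to mu' moves w by at most |mu - mu'|_1 + L_Q |mu[X] - mu'[X]|_1 in l1, since each
  pi_k(x, .) is a probability vector that is L_Q-Lipschitz in mu[X]. Splitting
  w F - w' G = (w - w') F + w' (F - G) then bounds r^MF and P^MF by sup |F| times this
  distance plus the Lipschitz modulus of the kernel in (mu[X], nu[U]); the latter
  difference is again controlled by the bound on w.\<close>

lemma abs_mult_diff_le:
  fixes a a' f g :: real
  assumes "0 \<le> a'"
  shows "\<bar>a * f - a' * g\<bar> \<le> \<bar>a - a'\<bar> * \<bar>f\<bar> + a' * \<bar>f - g\<bar>"
proof -
  have "a * f - a' * g = (a - a') * f + a' * (f - g)"
    by (simp add: algebra_simps)
  then show ?thesis
    using assms by (metis abs_mult abs_of_nonneg abs_triangle_ineq)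
qed

lemma sum_abs_mult_diff_le:
  fixes a a' :: real
  assumes "0 \<le> a'"
  shows "(\<Sum>y\<in>Y. \<bar>a * F y - a' * G y\<bar>)
    \<le> \<bar>a - a'\<bar> * (\<Sum>y\<in>Y. \<bar>F y\<bar>) + a' * (\<Sum>y\<in>Y. \<bar>F y - G y\<bar>)"
proof -
  have "(\<Sum>y\<in>Y. \<bar>a * F y - a' * G y\<bar>) \<le> (\<Sum>y\<in>Y. \<bar>a - a'\<bar> * \<bar>F y\<bar> + a' * \<bar>F y - G y\<bar>)"
    using assms by (intro sum_mono abs_mult_diff_le)
  then show ?thesis
    by (simp add: sum.distrib sum_distrib_left)
qed

lemma sum_abs_mixture_diff_le:
  fixes a a' :: "'i \<Rightarrow> real" and F G :: "'i \<Rightarrow> 'y \<Rightarrow> real"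
  assumes nonneg: "\<And>i. i \<in> I \<Longrightarrow> 0 \<le> a' i"
    and bound: "\<And>i. i \<in> I \<Longrightarrow> (\<Sum>y\<in>Y. \<bar>F i y\<bar>) \<le> B"
    and lip: "\<And>i. i \<in> I \<Longrightarrow> (\<Sum>y\<in>Y. \<bar>F i y - G i y\<bar>) \<le> D"
  shows "(\<Sum>y\<in>Y. \<bar>\<Sum>i\<in>I. a i * F i y - a' i * G i y\<bar>)
    \<le> B * (\<Sum>i\<in>I. \<bar>a i - a' i\<bar>) + D * (\<Sum>i\<in>I. a' i)"
proof -
  have "(\<Sum>y\<in>Y. \<bar>\<Sum>i\<in>I. a i * F i y - a' i * G i y\<bar>)
      \<le> (\<Sum>y\<in>Y. \<Sum>i\<in>I. \<bar>a i * F i y - a' i * G i y\<bar>)"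
    by (intro sum_mono sum_abs)
  also have "\<dots> = (\<Sum>i\<in>I. \<Sum>y\<in>Y. \<bar>a i * F i y - a' i * G i y\<bar>)"
    by (rule sum.swap)
  also have "\<dots> \<le> (\<Sum>i\<in>I. \<bar>a i - a' i\<bar> * B + a' i * D)"
    by (intro sum_mono order.trans[OF sum_abs_mult_diff_le] add_mono mult_left_mono)
      (simp_all add: nonneg bound lip)
  also have "\<dots> = B * (\<Sum>i\<in>I. \<bar>a i - a' i\<bar>) + D * (\<Sum>i\<in>I. a' i)"
    by (simp add: sum.distrib sum_distrib_left mult.commute)
  finally show ?thesis .
qed

lemma is_distK_sum_swap:
  assumes "is_distK K f"
  shows "(\<Sum>k\<in>{1..K}. \<Sum>a\<in>UNIV. f a k) = 1"
  using assms sum.swap[of "\<lambda>k a. f a k" UNIV "{1..K}"] by (simp add: is_distK_def)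

lemma is_dist_marg:
  assumes "is_distK K f"
  shows "is_dist (marg K f)"
  using assms unfolding is_distK_def is_dist_def marg_def by (auto intro: sum_nonneg)

lemma l1_marg_le_l1K: "l1 (marg K f) (marg K g) \<le> l1K K f g"
  unfolding l1_def l1K_def marg_def
  by (rule sum_mono) (simp add: sum_subtractf[symmetric] sum_abs)

lemma sum_classes_l1K_plus_mass:
  assumes "is_distK K w'"
  shows "(\<Sum>k\<in>{1..K}. B * (\<Sum>i\<in>UNIV. \<bar>w i k - w' i k\<bar>) + D * (\<Sum>i\<in>UNIV. w' i k))
    = B * l1K K w w' + D"
proof -
  have "(\<Sum>k\<in>{1..K}. \<Sum>i\<in>UNIV. \<bar>w i k - w' i k\<bar>) = l1K K w w'"
    unfolding l1K_def by (rule sum.swap)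
  then show ?thesis
    using is_distK_sum_swap[OF assms] by (simp add: sum.distrib sum_distrib_left[symmetric])
qed

lemma l1K_mixture_le:
  fixes w w' :: "'i::finite \<Rightarrow> nat \<Rightarrow> real" and F G :: "nat \<Rightarrow> 'i \<Rightarrow> 'y::finite \<Rightarrow> real"
  assumes w': "is_distK K w'"
    and bound: "\<And>k i. k \<in> {1..K} \<Longrightarrow> (\<Sum>y\<in>UNIV. \<bar>F k i y\<bar>) \<le> B"
    and lip: "\<And>k i. k \<in> {1..K} \<Longrightarrow> l1 (F k i) (G k i) \<le> D"
  shows "l1K K (\<lambda>y k. \<Sum>i\<in>UNIV. w i k * F k i y) (\<lambda>y k. \<Sum>i\<in>UNIV. w' i k * G k i y)
    \<le> B * l1K K w w' + D"
proof -
  have "l1K K (\<lambda>y k. \<Sum>i\<in>UNIV. w i k * F k i y) (\<lambda>y k. \<Sum>i\<in>UNIV. w' i k * G k i y)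
      = (\<Sum>k\<in>{1..K}. \<Sum>y\<in>UNIV. \<bar>\<Sum>i\<in>UNIV. w i k * F k i y - w' i k * G k i y\<bar>)"
    unfolding l1K_def sum_subtractf by (rule sum.swap)
  also have "\<dots> \<le> (\<Sum>k\<in>{1..K}. B * (\<Sum>i\<in>UNIV. \<bar>w i k - w' i k\<bar>) + D * (\<Sum>i\<in>UNIV. w' i k))"
    using w' bound lip
    by (intro sum_mono sum_abs_mixture_diff_le) (auto simp: is_distK_def l1_def)
  also have "\<dots> = B * l1K K w w' + D"
    using w' by (rule sum_classes_l1K_plus_mass)
  finally show ?thesis .
qed

lemma sum_abs_scalar_mixture_le:
  fixes w w' :: "'i::finite \<Rightarrow> nat \<Rightarrow> real" and f g :: "nat \<Rightarrow> 'i \<Rightarrow> real"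
  assumes "is_distK K w'"
    and "\<And>k i. k \<in> {1..K} \<Longrightarrow> \<bar>f k i\<bar> \<le> B"
    and "\<And>k i. k \<in> {1..K} \<Longrightarrow> \<bar>f k i - g k i\<bar> \<le> D"
  shows "(\<Sum>k\<in>{1..K}. \<bar>(\<Sum>i\<in>UNIV. w i k * f k i) - (\<Sum>i\<in>UNIV. w' i k * g k i)\<bar>)
    \<le> B * l1K K w w' + D"
  using l1K_mixture_le[of K w' "\<lambda>k i (_::unit). f k i" B "\<lambda>k i _. g k i" D w] assms
  by (simp add: l1K_def l1_def)

lemma is_distK_sum_fst:
  fixes F :: "'x::finite \<times> 'u::finite \<Rightarrow> nat \<Rightarrow> real"
  assumes "is_distK K F"
  shows "is_distK K (\<lambda>u k. \<Sum>x\<in>UNIV. F (x, u) k)"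
proof -
  have "(\<Sum>u\<in>UNIV. \<Sum>k\<in>{1..K}. \<Sum>x\<in>UNIV. F (x, u) k)
      = (\<Sum>u\<in>UNIV. \<Sum>x\<in>UNIV. \<Sum>k\<in>{1..K}. F (x, u) k)"
    by (intro sum.cong refl) (rule sum.swap)
  also have "\<dots> = (\<Sum>z\<in>UNIV. \<Sum>k\<in>{1..K}. F z k)"
    unfolding sum.cartesian_product'[of _ UNIV UNIV, unfolded UNIV_Times_UNIV] by (rule sum.swap)
  also have "\<dots> = 1"
    using assms by (simp add: is_distK_def)
  finally show ?thesis
    using assms unfolding is_distK_def by (auto intro: sum_nonneg)
qed

lemma l1K_sum_fst_le:
  fixes F G :: "'x::finite \<times> 'u::finite \<Rightarrow> nat \<Rightarrow> real"
  shows "l1K K (\<lambda>u k. \<Sum>x\<in>UNIV. F (x, u) k) (\<lambda>u k. \<Sum>x\<in>UNIV. G (x, u) k) \<le> l1K K F G"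
proof -
  have "l1K K (\<lambda>u k. \<Sum>x\<in>UNIV. F (x, u) k) (\<lambda>u k. \<Sum>x\<in>UNIV. G (x, u) k)
      \<le> (\<Sum>u\<in>UNIV. \<Sum>k\<in>{1..K}. \<Sum>x\<in>UNIV. \<bar>F (x, u) k - G (x, u) k\<bar>)"
    unfolding l1K_def by (intro sum_mono) (simp add: sum_subtractf[symmetric] sum_abs)
  also have "\<dots> = (\<Sum>u\<in>UNIV. \<Sum>x\<in>UNIV. \<Sum>k\<in>{1..K}. \<bar>F (x, u) k - G (x, u) k\<bar>)"
    by (intro sum.cong refl) (rule sum.swap)
  also have "\<dots> = l1K K F G"
    unfolding l1K_def sum.cartesian_product'[of _ UNIV UNIV, unfolded UNIV_Times_UNIV] by (rule sum.swap)
  finally show ?thesis .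
qed

definition state_action_dist ::
    "nat \<Rightarrow> ('x \<Rightarrow> nat \<Rightarrow> real) \<Rightarrow> (nat \<Rightarrow> 'x \<Rightarrow> ('x \<Rightarrow> real) \<Rightarrow> 'u \<Rightarrow> real)
      \<Rightarrow> 'x \<times> 'u \<Rightarrow> nat \<Rightarrow> real" where
  "state_action_dist K mu pol xu k = mu (fst xu) k * pol k (fst xu) (marg K mu) (snd xu)"

lemma nuMF_eq_sum_state_action_dist:
  "nuMF K mu pol = (\<lambda>u k. \<Sum>x\<in>UNIV. state_action_dist K mu pol (x, u) k)"
  by (simp add: fun_eq_iff nuMF_def state_action_dist_def mult.commute)

lemma PMF_eq_mixture:
  "PMF K P mu pol = (\<lambda>y k. \<Sum>xu\<in>UNIV. state_action_dist K mu pol xu k *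
     P k (fst xu) (snd xu) (marg K mu) (marg K (nuMF K mu pol)) y)"
  by (simp add: fun_eq_iff PMF_def state_action_dist_def
      sum.cartesian_product'[of _ UNIV UNIV, unfolded UNIV_Times_UNIV])

lemma rMF_eq_mixture:
  "rMF K r mu pol = (\<lambda>k. \<Sum>xu\<in>UNIV. state_action_dist K mu pol xu k *
     r k (fst xu) (snd xu) (marg K mu) (marg K (nuMF K mu pol)))"
  by (simp add: fun_eq_iff rMF_def state_action_dist_def
      sum.cartesian_product'[of _ UNIV UNIV, unfolded UNIV_Times_UNIV])

lemma is_distK_state_action_dist:
  fixes mu :: "'x::finite \<Rightarrow> nat \<Rightarrow> real" and pol :: "nat \<Rightarrow> 'x \<Rightarrow> ('x \<Rightarrow> real) \<Rightarrow> 'u::finite \<Rightarrow> real"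
  assumes mu: "is_distK K mu" and pol: "\<And>k x. k \<in> {1..K} \<Longrightarrow> is_dist (pol k x (marg K mu))"
  shows "is_distK K (state_action_dist K mu pol)"
proof -
  have "(\<Sum>xu\<in>UNIV. \<Sum>k\<in>{1..K}. state_action_dist K mu pol xu k)
      = (\<Sum>x\<in>UNIV. \<Sum>k\<in>{1..K}. \<Sum>u\<in>UNIV. mu x k * pol k x (marg K mu) u)"
    unfolding sum.cartesian_product'[of _ UNIV UNIV, unfolded UNIV_Times_UNIV] state_action_dist_def
    by (intro sum.cong refl) (simp, rule sum.swap)
  also have "\<dots> = (\<Sum>x\<in>UNIV. \<Sum>k\<in>{1..K}. mu x k)"
    using pol by (simp add: sum_distrib_left[symmetric] is_dist_def)
  finally show ?thesis
    using mu pol unfolding is_distK_def is_dist_def state_action_dist_def by simp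
qed

lemma l1K_state_action_dist_le:
  fixes mu mu' :: "'x::finite \<Rightarrow> nat \<Rightarrow> real"
    and pol :: "nat \<Rightarrow> 'x \<Rightarrow> ('x \<Rightarrow> real) \<Rightarrow> 'u::finite \<Rightarrow> real"
  assumes mu: "is_distK K mu" and mu': "is_distK K mu'"
    and pol_dist: "\<And>k x m. k \<in> {1..K} \<Longrightarrow> is_dist m \<Longrightarrow> is_dist (pol k x m)"
    and pol_lip: "\<And>k x m1 m2. k \<in> {1..K} \<Longrightarrow> is_dist m1 \<Longrightarrow> is_dist m2 \<Longrightarrow>
        l1 (pol k x m1) (pol k x m2) \<le> L_Q * l1 m1 m2"
  shows "l1K K (state_action_dist K mu pol) (state_action_dist K mu' pol)
    \<le> l1K K mu mu' + L_Q * l1 (marg K mu) (marg K mu')"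
proof -
  let ?m = "marg K mu" and ?m' = "marg K mu'"
  have dist: "is_dist ?m" "is_dist ?m'"
    using mu mu' by (simp_all add: is_dist_marg)
  have "l1K K (state_action_dist K mu pol) (state_action_dist K mu' pol)
      = (\<Sum>k\<in>{1..K}. \<Sum>xu\<in>UNIV. \<bar>state_action_dist K mu pol xu k - state_action_dist K mu' pol xu k\<bar>)"
    unfolding l1K_def by (rule sum.swap)
  also have "\<dots> = (\<Sum>k\<in>{1..K}. \<Sum>x\<in>UNIV. \<Sum>u\<in>UNIV. \<bar>mu x k * pol k x ?m u - mu' x k * pol k x ?m' u\<bar>)"
    unfolding sum.cartesian_product'[of _ UNIV UNIV, unfolded UNIV_Times_UNIV] state_action_dist_def
    by simp
  also have "\<dots> \<le> (\<Sum>k\<in>{1..K}. \<Sum>x\<in>UNIV. \<bar>mu x k - mu' x k\<bar> * 1 + mu' x k * (L_Q * l1 ?m ?m'))"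
  proof (intro sum_mono order.trans[OF sum_abs_mult_diff_le] add_mono mult_left_mono)
    fix k x assume k: "k \<in> {1..K}"
    show "(\<Sum>u\<in>UNIV. \<bar>pol k x ?m u\<bar>) \<le> 1"
      using pol_dist[OF k dist(1)] by (simp add: is_dist_def)
    show "(\<Sum>u\<in>UNIV. \<bar>pol k x ?m u - pol k x ?m' u\<bar>) \<le> L_Q * l1 ?m ?m'"
      using pol_lip[OF k dist] by (simp add: l1_def)
  qed (use mu' in \<open>auto simp: is_distK_def\<close>)
  also have "\<dots> = (\<Sum>k\<in>{1..K}. 1 * (\<Sum>x\<in>UNIV. \<bar>mu x k - mu' x k\<bar>)
      + L_Q * l1 ?m ?m' * (\<Sum>x\<in>UNIV. mu' x k))"
    by (simp add: sum.distrib sum_distrib_left mult.commute[of "mu' _ _"])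
  also have "\<dots> = 1 * l1K K mu mu' + L_Q * l1 ?m ?m'"
    using mu' by (rule sum_classes_l1K_plus_mass)
  finally show ?thesis by simp
qed

theorem lemma11:
  fixes K :: nat
    and r :: "nat \<Rightarrow> 'x::finite \<Rightarrow> 'u::finite \<Rightarrow> ('x \<Rightarrow> real) \<Rightarrow> ('u \<Rightarrow> real) \<Rightarrow> real"
    and P :: "nat \<Rightarrow> 'x \<Rightarrow> 'u \<Rightarrow> ('x \<Rightarrow> real) \<Rightarrow> ('u \<Rightarrow> real) \<Rightarrow> 'x \<Rightarrow> real"
    and pol :: "nat \<Rightarrow> 'x \<Rightarrow> ('x \<Rightarrow> real) \<Rightarrow> 'u \<Rightarrow> real"
    and mu mu' :: "'x \<Rightarrow> nat \<Rightarrow> real"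
    and M_R L_R L_P L_Q :: real
  assumes K: "K \<ge> 1"
    and pos: "M_R > 0" "L_R > 0" "L_P > 0" "L_Q > 0"
    and r_bound: "\<And>k x u m n. k \<in> {1..K} \<Longrightarrow> is_dist m \<Longrightarrow> is_dist n \<Longrightarrow> \<bar>r k x u m n\<bar> \<le> M_R"
    and r_lip: "\<And>k x u m1 n1 m2 n2. k \<in> {1..K} \<Longrightarrow> is_dist m1 \<Longrightarrow> is_dist n1 \<Longrightarrow>
        is_dist m2 \<Longrightarrow> is_dist n2 \<Longrightarrow>
        \<bar>r k x u m1 n1 - r k x u m2 n2\<bar> \<le> L_R * (l1 m1 m2 + l1 n1 n2)"
    and P_dist: "\<And>k x u m n. k \<in> {1..K} \<Longrightarrow> is_dist m \<Longrightarrow> is_dist n \<Longrightarrow> is_dist (P k x u m n)"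
    and P_lip: "\<And>k x u m1 n1 m2 n2. k \<in> {1..K} \<Longrightarrow> is_dist m1 \<Longrightarrow> is_dist n1 \<Longrightarrow>
        is_dist m2 \<Longrightarrow> is_dist n2 \<Longrightarrow>
        l1 (P k x u m1 n1) (P k x u m2 n2) \<le> L_P * (l1 m1 m2 + l1 n1 n2)"
    and pi_dist: "\<And>k x m. k \<in> {1..K} \<Longrightarrow> is_dist m \<Longrightarrow> is_dist (pol k x m)"
    and pi_lip: "\<And>k x m1 m2. k \<in> {1..K} \<Longrightarrow> is_dist m1 \<Longrightarrow> is_dist m2 \<Longrightarrow>
        l1 (pol k x m1) (pol k x m2) \<le> L_Q * l1 m1 m2"
    and mu: "is_distK K mu" and mu': "is_distK K mu'"
  shows
   "l1 (marg K (nuMF K mu pol)) (marg K (nuMF K mu' pol)) \<le> l1K K (nuMF K mu pol) (nuMF K mu' pol)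
    \<and> l1K K (nuMF K mu pol) (nuMF K mu' pol) \<le> l1K K mu mu' + L_Q * l1 (marg K mu) (marg K mu')
    \<and> (\<Sum>k\<in>{1..K}. \<bar>rMF K r mu pol k - rMF K r mu' pol k\<bar>)
        \<le> (M_R + L_R) * l1K K mu mu' + (M_R * L_Q + L_R * (1 + L_Q)) * l1 (marg K mu) (marg K mu')
    \<and> l1 (marg K (PMF K P mu pol)) (marg K (PMF K P mu' pol)) \<le> l1K K (PMF K P mu pol) (PMF K P mu' pol)
    \<and> l1K K (PMF K P mu pol) (PMF K P mu' pol)
        \<le> (1 + L_P) * l1K K mu mu' + (L_Q + L_P * (1 + L_Q)) * l1 (marg K mu) (marg K mu')"
proof -
  let ?m = "marg K mu" and ?m' = "marg K mu'"
  let ?n = "marg K (nuMF K mu pol)" and ?n' = "marg K (nuMF K mu' pol)"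
  let ?w = "state_action_dist K mu pol" and ?w' = "state_action_dist K mu' pol"
  let ?W = "l1 ?m ?m' + l1 ?n ?n'"
  have dist_w: "is_distK K ?w" "is_distK K ?w'"
    using mu mu' by (auto intro!: is_distK_state_action_dist pi_dist is_dist_marg)
  have dist_mn: "is_dist ?m" "is_dist ?m'" "is_dist ?n" "is_dist ?n'"
    using mu mu' dist_w
    by (auto intro!: is_dist_marg is_distK_sum_fst simp: nuMF_eq_sum_state_action_dist)
  have w: "l1K K ?w ?w' \<le> l1K K mu mu' + L_Q * l1 ?m ?m'"
    using mu mu' pi_dist pi_lip by (rule l1K_state_action_dist_le)
  have nu: "l1K K (nuMF K mu pol) (nuMF K mu' pol) \<le> l1K K ?w ?w'"
    unfolding nuMF_eq_sum_state_action_dist by (rule l1K_sum_fst_le)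
  have W: "?W \<le> l1K K mu mu' + (1 + L_Q) * l1 ?m ?m'"
    using w nu l1_marg_le_l1K[of K "nuMF K mu pol" "nuMF K mu' pol"] by (simp add: algebra_simps)
  have r: "(\<Sum>k\<in>{1..K}. \<bar>rMF K r mu pol k - rMF K r mu' pol k\<bar>) \<le> M_R * l1K K ?w ?w' + L_R * ?W"
    unfolding rMF_eq_mixture
    by (rule sum_abs_scalar_mixture_le[OF dist_w(2)]) (simp_all add: r_bound r_lip dist_mn)
  have P: "l1K K (PMF K P mu pol) (PMF K P mu' pol) \<le> 1 * l1K K ?w ?w' + L_P * ?W"
    unfolding PMF_eq_mixture
    by (rule l1K_mixture_le[OF dist_w(2)])
      (use P_dist dist_mn in \<open>simp_all add: P_lip is_dist_def\<close>)
  have "(\<Sum>k\<in>{1..K}. \<bar>rMF K r mu pol k - rMF K r mu' pol k\<bar>)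
      \<le> M_R * (l1K K mu mu' + L_Q * l1 ?m ?m') + L_R * (l1K K mu mu' + (1 + L_Q) * l1 ?m ?m')"
    using order.trans[OF r add_mono[OF mult_left_mono[OF w] mult_left_mono[OF W]]] pos by simp
  moreover have "l1K K (PMF K P mu pol) (PMF K P mu' pol)
      \<le> 1 * (l1K K mu mu' + L_Q * l1 ?m ?m') + L_P * (l1K K mu mu' + (1 + L_Q) * l1 ?m ?m')"
    using order.trans[OF P add_mono[OF mult_left_mono[OF w] mult_left_mono[OF W]]] pos by simp
  ultimately show ?thesis
    using nu w by (simp add: l1_marg_le_l1K algebra_simps)
qed

end
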